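(* Let $K$ be a field, $S=K[x_1,\ldots,x_n]$, and let $I\subseteq S$ be a squarefree strongly stable ideal generated in degree $d$. Then for all $j\ge0$, \[ \mu_{d+j}(I)=\sum_{i=0}^{n-d}\binom{n-d-i}{j}m_{d+i}(I). \]
   Context: A squarefree monomial ideal $I$ with minimal monomial generating set $G(I)$ is squarefree strongly stable if for every $u\in G(I)$ and all $i<j$ with $x_j\mid u$ and $x_i\nmid u$, one has $x_iu/x_j\in I$. For a monomial $u$, $m(u)=\max\{j: x_j\mid u\}$. $G_i(I)=\{u\in G(I): m(u)=i\}$ and $m_i(I)=|G_i(I)|$. $I_{[j]}$ is the ideal generated by all squarefree monomials of degree $j$ in $I$, and $\mu_j(I)$ is the number of minimal monomial generators of $I_{[j]}$ (i.e., the number of squarefree monomials of degree $j$ in $I$). Binomial coefficients $\binom{a}{b}$ with $b>a\ge0$ are $0$. *)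

theory Defs
  imports Main
begin

text \<open>A squarefree monomial x_{i1}...x_{ik} in K[x_1,...,x_n] is represented by its
support, a subset of {1..n}; divisibility of squarefree monomials is inclusion.
A squarefree monomial ideal I is represented by its minimal monomial generating
set G = G(I), a finite antichain of such supports.\<close>

definition in_ideal :: "nat set set \<Rightarrow> nat set \<Rightarrow> bool" where
  "in_ideal G u \<longleftrightarrow> (\<exists>g\<in>G. g \<subseteq> u)"

definition minimal_sqf_gens :: "nat \<Rightarrow> nat set set \<Rightarrow> bool" where
  "minimal_sqf_gens n G \<longleftrightarrow> finite G \<and> (\<forall>g\<in>G. g \<subseteq> {1..n}) \<and>
     (\<forall>g\<in>G. \<forall>h\<in>G. g \<subseteq> h \<longrightarrow> g = h)"

definition sqf_strongly_stable :: "nat set set \<Rightarrow> bool" where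
  "sqf_strongly_stable G \<longleftrightarrow>
     (\<forall>u\<in>G. \<forall>i j. 1 \<le> i \<and> i < j \<and> j \<in> u \<and> i \<notin> u \<longrightarrow> in_ideal G (insert i (u - {j})))"

text \<open>m(u) = max index of a variable dividing u (convention m(1) = 0).\<close>
definition mmax :: "nat set \<Rightarrow> nat" where
  "mmax u = Max (insert 0 u)"

definition m_count :: "nat set set \<Rightarrow> nat \<Rightarrow> nat" where
  "m_count G i = card {u \<in> G. mmax u = i}"

definition mu :: "nat \<Rightarrow> nat set set \<Rightarrow> nat \<Rightarrow> nat" where
  "mu n G j = card {A. A \<subseteq> {1..n} \<and> card A = j \<and> in_ideal G A}"

end

theory Submission
  imports Defs
begin

text \<open>A squarefree monomial w of degree d + j lies in I exactly when its d smallest variables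
form a generator u; then w = u \<union> V with V any j-subset of {m(u)+1..n}. Indeed, if some
generator g divides w, strong stability lets us replace the variables of g outside u one by one
by smaller ones of u, staying inside G, until we reach u. Hence the squarefree monomials of
degree d + j in I are counted by the sum over u \<in> G of the binomial coefficients
(n - m(u) choose j), which regrouped by m(u) is the claimed formula.\<close>

definition initial_segment :: "'a::linorder set \<Rightarrow> 'a set \<Rightarrow> bool" where
  "initial_segment u w \<longleftrightarrow> u \<subseteq> w \<and> (\<forall>x\<in>u. \<forall>y\<in>w - u. x < y)"

lemma initial_segment_exists:
  fixes w :: "'a::linorder set"
  assumes "finite w" "d \<le> card w"
  shows "\<exists>u. initial_segment u w \<and> card u = d"
proof -
  define xs where "xs = sorted_list_of_set w"
  have xs: "distinct xs" "sorted xs" "set xs = w" "length xs = card w"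
    using assms unfolding xs_def by auto
  define u where "u = set (take d xs)"
  have rest: "w - u = set (drop d xs)"
    unfolding u_def xs(3)[symmetric] using xs(1)
    by (metis Diff_cancel Un_Diff append_take_drop_id set_append set_take_disj_set_drop_if_distinct
        order_refl Diff_triv sup_bot.left_neutral inf_commute)
  have "card u = d"
    unfolding u_def using distinct_card[OF distinct_take[OF xs(1)]] xs(4) assms(2) by simp
  moreover have "u \<subseteq> w" unfolding u_def xs(3)[symmetric] by (rule set_take_subset)
  moreover have "x < y" if "x \<in> u" "y \<in> w - u" for x y
  proof -
    have "sorted (take d xs @ drop d xs)" using xs(2) by simp
    then have "x \<le> y" using that rest unfolding u_def sorted_append by auto
    moreover have "x \<noteq> y" using that by auto
    ultimately show "x < y" by simp
  qed
  ultimately show ?thesis unfolding initial_segment_def by blast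
qed

lemma initial_segment_unique:
  fixes w :: "'a::linorder set"
  assumes "finite w" "initial_segment u w" "initial_segment u' w" "card u = card u'"
  shows "u = u'"
proof (rule ccontr)
  assume ne: "u \<noteq> u'"
  have sub: "u \<subseteq> w" "u' \<subseteq> w" using assms(2,3) unfolding initial_segment_def by auto
  then have fin: "finite u" "finite u'" using assms(1) finite_subset by blast+
  have "\<not> u \<subseteq> u'" using card_subset_eq[OF fin(2)] assms(4) ne by metis
  then obtain x where x: "x \<in> u" "x \<notin> u'" by blast
  have "u' \<subseteq> u"
  proof
    fix y assume y: "y \<in> u'"
    show "y \<in> u"
    proof (rule ccontr)
      assume "y \<notin> u"
      then have "x < y" "y < x"
        using assms(2,3) x y sub unfolding initial_segment_def by blast+
      then show False by simp
    qed
  qed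
  then show False using card_subset_eq[OF fin(1)] assms(4) ne by metis
qed

lemma mmax_ge: "finite u \<Longrightarrow> x \<in> u \<Longrightarrow> x \<le> mmax u"
  unfolding mmax_def by simp

lemma mmax_le: "u \<subseteq> {1..n} \<Longrightarrow> mmax u \<le> n"
  unfolding mmax_def using finite_subset[of u "{1..n}"] by (subst Max_le_iff) auto

lemma card_le_mmax: "u \<subseteq> {1..n} \<Longrightarrow> card u \<le> mmax u"
proof -
  assume u: "u \<subseteq> {1..n}"
  then have "u \<subseteq> {1..mmax u}" using mmax_ge[of u] finite_subset[of u "{1..n}"] by auto
  then show ?thesis using card_mono[of "{1..mmax u}" u] by simp
qed

lemma initial_segment_Un_above_mmax:
  assumes "finite u" "V \<subseteq> {mmax u<..}"
  shows "initial_segment u (u \<union> V)" "u \<inter> V = {}"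
  using assms mmax_ge[OF assms(1)] unfolding initial_segment_def by fastforce+

lemma initial_segment_rest_above_mmax:
  assumes "finite w" "0 \<notin> w" "initial_segment u w"
  shows "w - u \<subseteq> {mmax u<..}"
proof
  fix y assume y: "y \<in> w - u"
  have "finite u" using assms finite_subset unfolding initial_segment_def by blast
  moreover have "0 < y" "\<forall>x\<in>u. x < y"
    using assms(2,3) y unfolding initial_segment_def by (auto intro!: gr0I)
  ultimately show "y \<in> {mmax u<..}" unfolding mmax_def by simp
qed

lemma initial_segment_in_gens:
  assumes stable: "sqf_strongly_stable G" and deg: "\<forall>g\<in>G. card g = d"
    and w: "finite w" "0 \<notin> w" and u: "initial_segment u w" "card u = d"
    and g: "g \<in> G" "g \<subseteq> w"
  shows "u \<in> G"
  using g
proof (induction "card (g - u)" arbitrary: g rule: less_induct)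
  case less
  have fg: "finite g" and fu: "finite u"
    using less.prems(2) u(1) w(1) finite_subset unfolding initial_segment_def by blast+
  have cg: "card g = d" using less.prems(1) deg by blast
  show ?case
  proof (cases "g \<subseteq> u")
    case True
    then show ?thesis using card_subset_eq[OF fu True] cg u(2) less.prems(1) by simp
  next
    case False
    then obtain j where j: "j \<in> g" "j \<notin> u" by blast
    have "\<not> u \<subseteq> g" using card_subset_eq[OF fg] cg u(2) False by metis
    then obtain i where i: "i \<in> u" "i \<notin> g" by blast
    have "i \<in> w" using i u(1) unfolding initial_segment_def by blast
    then have "1 \<le> i" using w(2) by (cases i) auto
    moreover have "i < j" using u(1) i j less.prems(2) unfolding initial_segment_def by blast
    ultimately have "in_ideal G (insert i (g - {j}))"
      using i(2) j(1) by (intro stable[unfolded sqf_strongly_stable_def, rule_format, OF less.prems(1)]) simp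
    define g' where "g' = insert i (g - {j})"
    obtain h where h: "h \<in> G" "h \<subseteq> g'" using \<open>in_ideal G _\<close> unfolding in_ideal_def g'_def by blast
    have "0 < d" using cg fg j(1) card_gt_0_iff by blast
    then have "card g' = d"
      unfolding g'_def using fg i(2) card_Diff_singleton[OF j(1)] cg by simp
    moreover have "finite g'" unfolding g'_def using fg by simp
    ultimately have g'G: "g' \<in> G" using card_subset_eq[OF _ h(2)] h(1) deg by metis
    have "g' - u = (g - u) - {j}" unfolding g'_def using i by blast
    then have "card (g' - u) < card (g - u)" using j fg by (metis Diff_iff card_Diff1_less finite_Diff)
    moreover have "g' \<subseteq> w" using less.prems(2) i u(1) unfolding g'_def initial_segment_def by blast
    ultimately show ?thesis using less.hyps g'G by blast
  qed
qed

lemma sqf_monomials_in_ideal_eq_UN: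
  assumes gens: "\<forall>g\<in>G. g \<subseteq> {1..n}" and deg: "\<forall>g\<in>G. card g = d"
    and stable: "sqf_strongly_stable G"
  shows "{A. A \<subseteq> {1..n} \<and> card A = d + j \<and> in_ideal G A}
       = (\<Union>u\<in>G. (\<union>) u ` {V. V \<subseteq> {mmax u<..n} \<and> card V = j})"
    (is "?T = (\<Union>u\<in>G. (\<union>) u ` ?P u)")
proof (intro equalityI subsetI)
  fix w assume "w \<in> ?T"
  then have w: "w \<subseteq> {1..n}" "card w = d + j" "in_ideal G w" by auto
  then obtain g where g: "g \<in> G" "g \<subseteq> w" unfolding in_ideal_def by blast
  have fw: "finite w" and w0: "0 \<notin> w" using w(1) finite_subset by auto
  obtain u where u: "initial_segment u w" "card u = d"
    using initial_segment_exists[OF fw, of d] w(2) by auto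
  have uG: "u \<in> G" using initial_segment_in_gens[OF stable deg fw w0 u g] .
  have uw: "u \<subseteq> w" using u(1) unfolding initial_segment_def by blast
  have "w - u \<subseteq> {mmax u<..n}"
    using initial_segment_rest_above_mmax[OF fw w0 u(1)] w(1) by fastforce
  moreover have "card (w - u) = j"
    using card_Diff_subset[OF finite_subset[OF uw fw] uw] u(2) w(2) by simp
  moreover have "w = u \<union> (w - u)" using uw by blast
  ultimately show "w \<in> (\<Union>u\<in>G. (\<union>) u ` ?P u)" using uG by blast
next
  fix w assume "w \<in> (\<Union>u\<in>G. (\<union>) u ` ?P u)"
  then obtain u V where uV: "u \<in> G" "V \<subseteq> {mmax u<..n}" "card V = j" "w = u \<union> V" by blast
  have fu: "finite u" and fV: "finite V"
    using gens uV(1,2) finite_subset[of u "{1..n}"] finite_subset[of V "{mmax u<..n}"] by auto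
  have "V \<subseteq> {mmax u<..}" using uV(2) by auto
  then have "u \<inter> V = {}" by (rule initial_segment_Un_above_mmax(2)[OF fu])
  then have "card w = d + j" using uV deg card_Un_disjoint[OF fu fV] by simp
  moreover have "w \<subseteq> {1..n}" using uV gens by auto
  moreover have "in_ideal G w" unfolding in_ideal_def using uV by blast
  ultimately show "w \<in> ?T" by blast
qed

lemma mu_eq_sum_choose:
  assumes gens: "minimal_sqf_gens n G" and deg: "\<forall>g\<in>G. card g = d"
    and stable: "sqf_strongly_stable G"
  shows "mu n G (d + j) = (\<Sum>u\<in>G. (n - mmax u) choose j)"
proof -
  have fG: "finite G" and Gs: "\<forall>g\<in>G. g \<subseteq> {1..n}"
    using gens unfolding minimal_sqf_gens_def by auto
  define P where "P u = {V. V \<subseteq> {mmax u<..n} \<and> card V = j}" for u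
  have fu: "finite u" if "u \<in> G" for u using Gs that finite_subset by blast
  have fP: "finite (P u)" for u
    unfolding P_def by (rule finite_subset[of _ "Pow {mmax u<..n}"]) auto
  have P_above: "V \<subseteq> {mmax u<..}" "finite V" if "V \<in> P u" for u V
    using that finite_subset[of V "{mmax u<..n}"] unfolding P_def by auto
  have card_image_P: "card ((\<union>) u ` P u) = (n - mmax u) choose j" if "u \<in> G" for u
  proof -
    have "inj_on ((\<union>) u) (P u)"
    proof (rule inj_onI)
      fix V V' assume "V \<in> P u" "V' \<in> P u" "u \<union> V = u \<union> V'"
      moreover from this(1,2) have "u \<inter> V = {}" "u \<inter> V' = {}"
        using initial_segment_Un_above_mmax(2)[OF fu[OF that]] P_above by blast+
      ultimately show "V = V'" by blast
    qed
    then have "card ((\<union>) u ` P u) = card (P u)" by (rule card_image)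
    also have "\<dots> = card {mmax u<..n} choose j" unfolding P_def by (rule n_subsets) simp
    finally show ?thesis by simp
  qed
  have disjoint: "(\<union>) u ` P u \<inter> (\<union>) u' ` P u' = {}" if "u \<in> G" "u' \<in> G" "u \<noteq> u'" for u u'
  proof (rule ccontr)
    assume "(\<union>) u ` P u \<inter> (\<union>) u' ` P u' \<noteq> {}"
    then obtain V V' where VV: "V \<in> P u" "V' \<in> P u'" "u \<union> V = u' \<union> V'" by blast
    have "finite (u \<union> V)" using fu[OF that(1)] P_above(2)[OF VV(1)] by simp
    moreover have "initial_segment u (u \<union> V)"
      by (rule initial_segment_Un_above_mmax(1)[OF fu[OF that(1)] P_above(1)[OF VV(1)]])
    moreover have "initial_segment u' (u \<union> V)"
      unfolding VV(3) by (rule initial_segment_Un_above_mmax(1)[OF fu[OF that(2)] P_above(1)[OF VV(2)]])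
    ultimately have "u = u'" by (rule initial_segment_unique) (simp add: deg that)
    then show False using that(3) by simp
  qed
  have "mu n G (d + j) = card (\<Union>u\<in>G. (\<union>) u ` P u)"
    unfolding mu_def P_def sqf_monomials_in_ideal_eq_UN[OF Gs deg stable] ..
  also have "\<dots> = (\<Sum>u\<in>G. card ((\<union>) u ` P u))"
  proof (rule card_UN_disjoint[OF fG])
    show "\<forall>u\<in>G. finite ((\<union>) u ` P u)" using fP by blast
    show "\<forall>u\<in>G. \<forall>u'\<in>G. u \<noteq> u' \<longrightarrow> (\<union>) u ` P u \<inter> (\<union>) u' ` P u' = {}"
      using disjoint by blast
  qed
  also have "\<dots> = (\<Sum>u\<in>G. (n - mmax u) choose j)" using card_image_P by simp
  finally show ?thesis .
qed

lemma sum_gens_by_mmax: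
  assumes "finite G" "mmax ` G \<subseteq> {a..b}"
  shows "(\<Sum>u\<in>G. f (mmax u)) = (\<Sum>k = a..b. f k * m_count G k)"
proof -
  have "(\<Sum>u\<in>G. f (mmax u)) = (\<Sum>k = a..b. \<Sum>u\<in>{x \<in> G. mmax x = k}. f (mmax u))"
    by (rule sum.group[symmetric, OF assms(1) _ assms(2)]) simp
  also have "\<dots> = (\<Sum>k = a..b. f k * m_count G k)"
    unfolding m_count_def by (rule sum.cong) (auto simp: mult.commute)
  finally show ?thesis .
qed

theorem lemma4p1:
  fixes n d j :: nat and G :: "nat set set"
  assumes "minimal_sqf_gens n G"
    and "\<forall>g\<in>G. card g = d"
    and "sqf_strongly_stable G"
  shows "mu n G (d + j) = (\<Sum>i = 0..n - d. ((n - d - i) choose j) * m_count G (d + i))"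
proof (cases "G = {}")
  case True
  then show ?thesis unfolding mu_def m_count_def in_ideal_def by simp
next
  case False
  have fG: "finite G" and Gs: "\<forall>g\<in>G. g \<subseteq> {1..n}"
    using assms(1) unfolding minimal_sqf_gens_def by auto
  have range: "mmax ` G \<subseteq> {d..n}"
  proof
    fix k assume "k \<in> mmax ` G"
    then obtain u where "u \<in> G" "k = mmax u" by blast
    then show "k \<in> {d..n}" using Gs assms(2) mmax_le[of u n] card_le_mmax[of u n] by auto
  qed
  obtain g where "g \<in> G" using False by blast
  then have "mmax g \<in> {d..n}" using range by blast
  then have shift: "{d..n} = {0 + d..(n - d) + d}" by auto
  have "mu n G (d + j) = (\<Sum>k = d..n. ((n - k) choose j) * m_count G k)"
    unfolding mu_eq_sum_choose[OF assms] by (rule sum_gens_by_mmax[OF fG range])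
  also have "\<dots> = (\<Sum>i = 0..n - d. ((n - (i + d)) choose j) * m_count G (i + d))"
    unfolding shift by (simp only: sum.shift_bounds_cl_nat_ivl)
  finally show ?thesis by (simp add: add.commute)
qed

end
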